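(* Let $G$ be a directed graph on vertex set $V$ with $|V|=n$, and let $\pi:V\to[1,n]$ be such that (a) if $x,y$ lie in distinct strongly connected components of $G$ and there is an $x\to y$ path in $G$, then $\pi(x)<\pi(y)$, and (b) if $x,y$ are strongly connected then $\pi(x)=\pi(y)$. Let $s\in V$, let $V_s$ be the set of vertices reachable from $s$ in $G$, let $\mathcal{S}_s$ be the set of strongly connected components of $G$ reachable from $s$, and let $\mathcal{S}_s'\subseteq\mathcal{S}_s$ be arbitrary. Suppose $H\subseteq G[V_s]$ with $V(H)=V_s$ satisfies: (1) for each $t\in V_s\setminus\{s\}$ for which some edge $vt\in E(G)$ with $v\in\bigcup\mathcal{S}_s'$ exists, $H$ contains such an edge $vt$ with $\pi(v)$ minimal among all $v\in\bigcup\mathcal{S}_s'$ with $vt\in E(G)$; (2) for all $(X,Y)\in(\mathcal{S}_s\setminus\mathcal{S}_s')\times\mathcal{S}_s$, $H$ contains an edge $xy\in E(G)\cap(X\times Y)$ if such an edge exists; (3) for each $S\in\mathcal{S}_s$, $H[S]$ is strongly connected. Then all vertices of $V_s$ are reachable from $s$ in $H$.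
   Context: Strongly connected components are the equivalence classes of mutual reachability; $G[U]$ denotes the subgraph induced by $U$. *)

theory Defs
  imports Main
begin

definition reach :: "('a \<times> 'a) set \<Rightarrow> 'a \<Rightarrow> 'a \<Rightarrow> bool" where
  "reach E x y \<longleftrightarrow> (x, y) \<in> E\<^sup>*"

definition strongly_connected_vertices :: "('a \<times> 'a) set \<Rightarrow> 'a \<Rightarrow> 'a \<Rightarrow> bool" where
  "strongly_connected_vertices E x y \<longleftrightarrow> reach E x y \<and> reach E y x"

definition sccs :: "'a set \<Rightarrow> ('a \<times> 'a) set \<Rightarrow> 'a set set" where
  "sccs V E = {{y \<in> V. strongly_connected_vertices E x y} | x. x \<in> V}"

definition induced_edges :: "('a \<times> 'a) set \<Rightarrow> 'a set \<Rightarrow> ('a \<times> 'a) set" where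
  "induced_edges E U = E \<inter> (U \<times> U)"

definition strongly_connected_set :: "('a \<times> 'a) set \<Rightarrow> 'a set \<Rightarrow> bool" where
  "strongly_connected_set E U \<longleftrightarrow>
     (\<forall>x\<in>U. \<forall>y\<in>U. reach (induced_edges E U) x y)"

end

theory Submission
  imports Defs
begin

text \<open>Induction on the rank \<open>\<pi> t\<close>. If \<open>s\<close> lies in the component \<open>C\<close> of \<open>t\<close>, condition (3)
  connects them inside \<open>H[C]\<close>. Otherwise a path from \<open>s\<close> to \<open>t\<close> enters \<open>C\<close> by a last edge
  \<open>uw\<close> with \<open>u \<notin> C\<close>, so \<open>\<pi> u < \<pi> t\<close>. If the component of \<open>u\<close> is in \<open>\<S>\<^sub>s'\<close>, condition (1)
  provides an \<open>H\<close>-edge \<open>vw\<close> with \<open>\<pi> v \<le> \<pi> u\<close>; otherwise condition (2) provides an \<open>H\<close>-edge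
  from the component of \<open>u\<close> into \<open>C\<close>. Either way \<open>H\<close> reaches \<open>C\<close> from a vertex of smaller rank,
  which \<open>H\<close> reaches from \<open>s\<close> by induction.\<close>

lemma rtrancl_enters_set:
  assumes "(a, b) \<in> E\<^sup>*" "a \<notin> P" "b \<in> P"
  shows "\<exists>u w. (a, u) \<in> E\<^sup>* \<and> (u, w) \<in> E \<and> u \<notin> P \<and> w \<in> P"
  using assms
proof (induction rule: rtrancl_induct)
  case (step y z)
  then show ?case
    by (cases "y \<in> P") (blast intro: rtrancl_into_rtrancl)+
qed simp

definition scc_of :: "'a set \<Rightarrow> ('a \<times> 'a) set \<Rightarrow> 'a \<Rightarrow> 'a set" where
  "scc_of V E x = {y \<in> V. strongly_connected_vertices E x y}"

lemma strongly_connected_vertices_iff: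
  "strongly_connected_vertices E x y \<longleftrightarrow> (x, y) \<in> E\<^sup>* \<and> (y, x) \<in> E\<^sup>*"
  by (simp add: strongly_connected_vertices_def reach_def)

lemma mem_scc_of_iff:
  "y \<in> scc_of V E x \<longleftrightarrow> y \<in> V \<and> (x, y) \<in> E\<^sup>* \<and> (y, x) \<in> E\<^sup>*"
  by (simp add: scc_of_def strongly_connected_vertices_iff)

lemma scc_of_self: "x \<in> V \<Longrightarrow> x \<in> scc_of V E x"
  by (simp add: mem_scc_of_iff)

lemma scc_of_in_sccs: "x \<in> V \<Longrightarrow> scc_of V E x \<in> sccs V E"
  unfolding sccs_def scc_of_def by blast

locale scc_ranking =
  fixes V :: "'a set" and E :: "('a \<times> 'a) set" and \<pi> :: "'a \<Rightarrow> nat"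
  assumes edges_in_V: "E \<subseteq> V \<times> V"
    and rank_increasing:
      "\<forall>x\<in>V. \<forall>y\<in>V. \<not> strongly_connected_vertices E x y \<and> reach E x y \<longrightarrow> \<pi> x < \<pi> y"
    and rank_constant: "\<forall>x\<in>V. \<forall>y\<in>V. strongly_connected_vertices E x y \<longrightarrow> \<pi> x = \<pi> y"
begin

lemma rank_scc_of: "x \<in> V \<Longrightarrow> y \<in> scc_of V E x \<Longrightarrow> \<pi> y = \<pi> x"
  using rank_constant unfolding scc_of_def by fastforce

lemma rank_less_edge_entering_scc:
  assumes "t \<in> V" "(u, w) \<in> E" "u \<notin> scc_of V E t" "w \<in> scc_of V E t"
  shows "\<pi> u < \<pi> t"
proof -
  have uV: "u \<in> V" and wV: "w \<in> V" using assms(2) edges_in_V by auto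
  have "(w, u) \<notin> E\<^sup>*"
  proof
    assume "(w, u) \<in> E\<^sup>*"
    moreover have "(t, w) \<in> E\<^sup>*" "(w, t) \<in> E\<^sup>*" using assms(4) by (simp_all add: mem_scc_of_iff)
    ultimately have "(t, u) \<in> E\<^sup>*" "(u, t) \<in> E\<^sup>*"
      using assms(2) by (auto intro: rtrancl_trans converse_rtrancl_into_rtrancl)
    then show False using assms(3) uV by (simp add: mem_scc_of_iff)
  qed
  then have "\<not> strongly_connected_vertices E u w" "reach E u w"
    using assms(2) by (auto simp: strongly_connected_vertices_iff reach_def)
  then have "\<pi> u < \<pi> w" using rank_increasing uV wV by blast
  then show ?thesis using rank_scc_of assms(1,4) by simp
qed

end

locale reachability_certificate = scc_ranking V E \<pi>
  for V :: "'a set" and E :: "('a \<times> 'a) set" and \<pi> :: "'a \<Rightarrow> nat" +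
  fixes EH :: "('a \<times> 'a) set" and s :: 'a and Vs :: "'a set" and Ss Ss' :: "'a set set"
  assumes Vs_def: "Vs = {v \<in> V. reach E s v}"
    and Ss_def: "Ss = {S \<in> sccs V E. \<exists>x\<in>S. reach E s x}"
    and Ss'_sub: "Ss' \<subseteq> Ss"
    and min_rank_edges: "\<forall>t\<in>Vs - {s}. (\<exists>v\<in>\<Union>Ss'. (v, t) \<in> E) \<longrightarrow>
          (\<exists>v\<in>\<Union>Ss'. (v, t) \<in> EH \<and> (\<forall>w\<in>\<Union>Ss'. (w, t) \<in> E \<longrightarrow> \<pi> v \<le> \<pi> w))"
    and scc_pair_edges: "\<forall>X\<in>Ss - Ss'. \<forall>Y\<in>Ss. (\<exists>x\<in>X. \<exists>y\<in>Y. (x, y) \<in> E) \<longrightarrow>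
          (\<exists>x\<in>X. \<exists>y\<in>Y. (x, y) \<in> EH)"
    and scc_strongly_connected: "\<forall>S\<in>Ss. strongly_connected_set EH S"
begin

lemma mem_Vs_iff: "v \<in> Vs \<longleftrightarrow> v \<in> V \<and> (s, v) \<in> E\<^sup>*"
  by (simp add: Vs_def reach_def)

lemma scc_of_in_Ss: "t \<in> Vs \<Longrightarrow> scc_of V E t \<in> Ss"
  unfolding Ss_def reach_def
  using scc_of_in_sccs scc_of_self by (fastforce simp: mem_Vs_iff)

lemma Union_Ss_subset_Vs: "\<Union>Ss \<subseteq> Vs"
  unfolding Ss_def sccs_def reach_def
  by (auto simp: mem_Vs_iff strongly_connected_vertices_iff intro: rtrancl_trans)

lemma scc_of_subset_Vs: "t \<in> Vs \<Longrightarrow> scc_of V E t \<subseteq> Vs"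
  using scc_of_in_Ss Union_Ss_subset_Vs by blast

lemma EH_reach_within_scc:
  assumes "t \<in> Vs" "x \<in> scc_of V E t" "y \<in> scc_of V E t"
  shows "(x, y) \<in> EH\<^sup>*"
proof -
  have "(x, y) \<in> (induced_edges EH (scc_of V E t))\<^sup>*"
    using scc_strongly_connected scc_of_in_Ss assms
    unfolding strongly_connected_set_def reach_def by blast
  then show ?thesis
    by (rule rtrancl_mono[THEN subsetD, rotated]) (auto simp: induced_edges_def)
qed

lemma edge_entering_scc:
  assumes "t \<in> Vs" "s \<notin> scc_of V E t"
  obtains u w where "u \<in> Vs" "(u, w) \<in> E" "u \<notin> scc_of V E t" "w \<in> scc_of V E t"
proof -
  have "(s, t) \<in> E\<^sup>*" "t \<in> scc_of V E t"
    using assms(1) by (auto simp: mem_Vs_iff scc_of_self)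
  then obtain u w where "(s, u) \<in> E\<^sup>*" "(u, w) \<in> E" "u \<notin> scc_of V E t" "w \<in> scc_of V E t"
    using rtrancl_enters_set assms(2) by metis
  moreover have "u \<in> V" using \<open>(u, w) \<in> E\<close> edges_in_V by auto
  ultimately show thesis using that by (auto simp: mem_Vs_iff)
qed

lemma EH_reaches_from_lower_rank:
  assumes tVs: "t \<in> Vs" and s_notin: "s \<notin> scc_of V E t"
  shows "\<exists>v\<in>Vs. \<pi> v < \<pi> t \<and> (v, t) \<in> EH\<^sup>*"
proof -
  define C where "C = scc_of V E t"
  obtain u w where uVs: "u \<in> Vs" and uw: "(u, w) \<in> E" and "u \<notin> C" and wC: "w \<in> C"
    using edge_entering_scc[OF assms] unfolding C_def by blast
  have tV: "t \<in> V" and uV: "u \<in> V" using tVs uVs by (auto simp: mem_Vs_iff)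
  have rank_u: "\<pi> u < \<pi> t"
    using rank_less_edge_entering_scc tV uw \<open>u \<notin> C\<close> wC unfolding C_def by blast
  have into_t: "(y, t) \<in> EH\<^sup>*" if "y \<in> C" for y
    using EH_reach_within_scc tVs that scc_of_self[OF tV] unfolding C_def by blast
  show ?thesis
  proof (cases "scc_of V E u \<in> Ss'")
    case True
    then have "u \<in> \<Union>Ss'" using scc_of_self[OF uV] by blast
    moreover have "w \<in> Vs - {s}" using wC s_notin scc_of_subset_Vs[OF tVs] unfolding C_def by auto
    ultimately obtain v where "v \<in> \<Union>Ss'" "(v, w) \<in> EH" "\<pi> v \<le> \<pi> u"
      using min_rank_edges uw by blast
    moreover have "v \<in> Vs" using \<open>v \<in> \<Union>Ss'\<close> Ss'_sub Union_Ss_subset_Vs by blast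
    ultimately show ?thesis
      using rank_u into_t[OF wC] by (meson converse_rtrancl_into_rtrancl le_less_trans)
  next
    case False
    then have "scc_of V E u \<in> Ss - Ss'" using scc_of_in_Ss[OF uVs] by simp
    moreover have "\<exists>x\<in>scc_of V E u. \<exists>y\<in>C. (x, y) \<in> E"
      using scc_of_self[OF uV] uw wC by blast
    ultimately obtain x y where "x \<in> scc_of V E u" "y \<in> C" "(x, y) \<in> EH"
      using scc_pair_edges scc_of_in_Ss[OF tVs] unfolding C_def by blast
    moreover have "x \<in> Vs" "\<pi> x = \<pi> u"
      using \<open>x \<in> scc_of V E u\<close> scc_of_subset_Vs[OF uVs] rank_scc_of[OF uV] by auto
    ultimately show ?thesis
      using rank_u into_t by (metis converse_rtrancl_into_rtrancl)
  qed
qed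

theorem EH_reaches_Vs: "v \<in> Vs \<Longrightarrow> (s, v) \<in> EH\<^sup>*"
proof (induction "\<pi> v" arbitrary: v rule: less_induct)
  case less
  show ?case
  proof (cases "s \<in> scc_of V E v")
    case True
    have "v \<in> V" using less.prems by (simp add: mem_Vs_iff)
    then show ?thesis by (rule EH_reach_within_scc[OF less.prems True scc_of_self])
  next
    case False
    then obtain u where "u \<in> Vs" "\<pi> u < \<pi> v" "(u, v) \<in> EH\<^sup>*"
      using EH_reaches_from_lower_rank less.prems by blast
    then show ?thesis using less.hyps by (meson rtrancl_trans)
  qed
qed

end

theorem lemma14:
  fixes V :: "'a set" and E EH :: "('a \<times> 'a) set" and \<pi> :: "'a \<Rightarrow> nat"
    and s :: 'a and Vs :: "'a set" and Ss Ss' :: "'a set set"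
  assumes finV: "finite V"
    and EV: "E \<subseteq> V \<times> V"
    and pi_range: "\<forall>x\<in>V. \<pi> x \<in> {1..card V}"
    and pi_a: "\<forall>x\<in>V. \<forall>y\<in>V. \<not> strongly_connected_vertices E x y \<and> reach E x y \<longrightarrow> \<pi> x < \<pi> y"
    and pi_b: "\<forall>x\<in>V. \<forall>y\<in>V. strongly_connected_vertices E x y \<longrightarrow> \<pi> x = \<pi> y"
    and sV: "s \<in> V"
    and Vs_def: "Vs = {v \<in> V. reach E s v}"
    and Ss_def: "Ss = {S \<in> sccs V E. \<exists>x\<in>S. reach E s x}"
    and Ss'_sub: "Ss' \<subseteq> Ss"
    and H_sub: "EH \<subseteq> induced_edges E Vs"
    and H1: "\<forall>t\<in>Vs - {s}. (\<exists>v\<in>\<Union>Ss'. (v, t) \<in> E) \<longrightarrow>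
              (\<exists>v\<in>\<Union>Ss'. (v, t) \<in> EH \<and> (\<forall>w\<in>\<Union>Ss'. (w, t) \<in> E \<longrightarrow> \<pi> v \<le> \<pi> w))"
    and H2: "\<forall>X\<in>Ss - Ss'. \<forall>Y\<in>Ss. (\<exists>x\<in>X. \<exists>y\<in>Y. (x, y) \<in> E) \<longrightarrow>
              (\<exists>x\<in>X. \<exists>y\<in>Y. (x, y) \<in> EH)"
    and H3: "\<forall>S\<in>Ss. strongly_connected_set EH S"
  shows "\<forall>v\<in>Vs. reach EH s v"
proof -
  interpret reachability_certificate V E \<pi> EH s Vs Ss Ss'
    by unfold_locales (fact EV pi_a pi_b Vs_def Ss_def Ss'_sub H1 H2 H3)+
  show ?thesis using EH_reaches_Vs by (simp add: reach_def)
qed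

end
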